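(* Let $A$ be a finite set, $\bot,\dagger\notin A$ distinct extra symbols, $N\geq1$, and let $\mathsf L$, $\pi$ and $\zeta_t$ ($t>0$) be as in the context. Let $\mu_{\mathsf L}$ denote the Möbius function of the finite poset $\mathsf L$ (the inverse of the matrix $\zeta_{\mathsf L}(x,y)=1$ if $x\leq y$ and $0$ otherwise). Then for all $x,y\in\mathsf L$, $$\zeta_t^{-1}(x,y)=\pi(y|x)^t\,\mu_{\mathsf L}(x,y).$$
   Context: $A^*$ is the set of finite strings over $A$, $|x|$ denotes length (with $\bot,\dagger$ counted). $\mathsf L=\{\bot a : a\in A^*,\ |a|\leq N-1\}\sqcup\{\bot a\dagger : a\in A^*,\ |a|<N-1\}$, partially ordered by the prefix relation ($x\leq y$ iff $y=xa'$ for some string $a'$). Strings $\bot a$ are unfinished texts. For each unfinished text $x\in\mathsf L$ with $|x|\leq N-1$ a probability mass function $p(-|x)$ on $A\cup\{\dagger\}$ is given. Define $\pi(y|x)=1$ if $x=y$; $0$ if $x\not\leq y$; and if $x=\bot a_1\cdots a_t$ is a proper prefix of $y=xa_{t+1}\cdots a_{t+k}$, $\pi(y|x)=\prod_{i=1}^k p(a_{t+i}\mid\bot a_1\cdots a_{t+i-1})$. For $t>0$, $\zeta_t$ is the $\mathsf L\times\mathsf L$ matrix $\zeta_t(x,y)=\pi(y|x)^t$ (which is invertible). *)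

theory Defs
  imports Complex_Main "HOL-Library.Sublist"
begin

datatype 'a sym = Bot | Dag | Sym 'a

text \<open>The poset L of texts (strings including Bot and Dag), ordered by prefix.\<close>
definition texts :: "'a set \<Rightarrow> nat \<Rightarrow> 'a sym list set" where
  "texts A N =
     {Bot # map Sym a | a. set a \<subseteq> A \<and> length a \<le> N - 1}
   \<union> {Bot # map Sym a @ [Dag] | a. set a \<subseteq> A \<and> length a < N - 1}"

definition unfinished :: "'a set \<Rightarrow> nat \<Rightarrow> 'a sym list set" where
  "unfinished A N = {Bot # map Sym a | a. set a \<subseteq> A \<and> length a \<le> N - 1}"

definition pi_cond :: "('a sym list \<Rightarrow> 'a sym \<Rightarrow> real) \<Rightarrow> 'a sym list \<Rightarrow> 'a sym list \<Rightarrow> real" where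
  "pi_cond p y x =
     (if prefix x y then (\<Prod>i\<in>{length x..<length y}. p (take i y) (y ! i)) else 0)"

definition zeta_t :: "('a sym list \<Rightarrow> 'a sym \<Rightarrow> real) \<Rightarrow> real \<Rightarrow> 'a sym list \<Rightarrow> 'a sym list \<Rightarrow> real" where
  "zeta_t p t x y = pi_cond p y x powr t"

definition zeta_prefix :: "'a sym list \<Rightarrow> 'a sym list \<Rightarrow> real" where
  "zeta_prefix x y = (if prefix x y then 1 else 0)"

definition is_inverse_on :: "'b set \<Rightarrow> ('b \<Rightarrow> 'b \<Rightarrow> real) \<Rightarrow> ('b \<Rightarrow> 'b \<Rightarrow> real) \<Rightarrow> bool" where
  "is_inverse_on S M M' \<longleftrightarrow>
     (\<forall>x\<in>S. \<forall>y\<in>S. (\<Sum>z\<in>S. M x z * M' z y) = (if x = y then 1 else 0)) \<and>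
     (\<forall>x\<in>S. \<forall>y\<in>S. (\<Sum>z\<in>S. M' x z * M z y) = (if x = y then 1 else 0))"

definition matinv :: "'b set \<Rightarrow> ('b \<Rightarrow> 'b \<Rightarrow> real) \<Rightarrow> ('b \<Rightarrow> 'b \<Rightarrow> real)" where
  "matinv S M = (THE M'. is_inverse_on S M M' \<and> (\<forall>x y. (x \<notin> S \<or> y \<notin> S) \<longrightarrow> M' x y = 0))"

definition mobius_L :: "'a set \<Rightarrow> nat \<Rightarrow> 'a sym list \<Rightarrow> 'a sym list \<Rightarrow> real" where
  "mobius_L A N = matinv (texts A N) zeta_prefix"

end

theory Submission
  imports Defs
begin

text \<open>
  The prefix order on \<open>L\<close> is a rooted tree, so its Moebius function is \<open>1\<close> on the diagonal,
  \<open>-1\<close> on the pairs \<open>(butlast y, y)\<close> and \<open>0\<close> elsewhere. Moreover \<open>w(x,y) = \<pi>(y|x)^t\<close> is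
  multiplicative along chains \<open>x \<le> z \<le> y\<close>, so multiplying both \<open>\<zeta>\<close> and \<open>\<mu>\<close> entrywise by \<open>w\<close>
  preserves \<open>\<Sum>\<^sub>z \<zeta>(x,z) \<mu>(z,y) = \<delta>(x,y)\<close>: every nonzero term picks up the same factor \<open>w(x,y)\<close>.
\<close>

lemma is_inverse_on_unique:
  assumes "finite S" and inv1: "is_inverse_on S M M1" and inv2: "is_inverse_on S M M2"
    and "x \<in> S" and "y \<in> S"
  shows "M1 x y = M2 x y"
proof -
  have "M1 x y = (\<Sum>z\<in>S. if z = y then M1 x z else 0)"
    using assms by simp
  also have "\<dots> = (\<Sum>z\<in>S. M1 x z * (\<Sum>w\<in>S. M z w * M2 w y))"
    using inv2 \<open>y \<in> S\<close> unfolding is_inverse_on_def by (intro sum.cong) auto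
  also have "\<dots> = (\<Sum>w\<in>S. (\<Sum>z\<in>S. M1 x z * M z w) * M2 w y)"
    unfolding sum_distrib_left sum_distrib_right mult.assoc by (rule sum.swap)
  also have "\<dots> = (\<Sum>w\<in>S. if x = w then M2 w y else 0)"
    using inv1 \<open>x \<in> S\<close> unfolding is_inverse_on_def by (intro sum.cong) auto
  also have "\<dots> = M2 x y"
    using assms by simp
  finally show ?thesis .
qed

lemma matinv_eqI:
  assumes "finite S" and "is_inverse_on S M M'"
    and "\<And>x y. x \<notin> S \<or> y \<notin> S \<Longrightarrow> M' x y = 0"
  shows "matinv S M = M'"
  unfolding matinv_def
proof (rule the_equality)
  fix M'' assume M'': "is_inverse_on S M M'' \<and> (\<forall>x y. x \<notin> S \<or> y \<notin> S \<longrightarrow> M'' x y = 0)"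
  show "M'' = M'"
    using is_inverse_on_unique[OF \<open>finite S\<close> _ \<open>is_inverse_on S M M'\<close>] M'' assms(3)
    by (intro ext) metis
qed (use assms in blast)

lemma is_inverse_on_weighted:
  assumes inv: "is_inverse_on S Z M"
    and Z_supp: "\<And>x y. x \<in> S \<Longrightarrow> y \<in> S \<Longrightarrow> Z x y \<noteq> 0 \<Longrightarrow> R x y"
    and M_supp: "\<And>x y. x \<in> S \<Longrightarrow> y \<in> S \<Longrightarrow> M x y \<noteq> 0 \<Longrightarrow> R x y"
    and w_mult: "\<And>x y z. x \<in> S \<Longrightarrow> y \<in> S \<Longrightarrow> z \<in> S \<Longrightarrow> R x y \<Longrightarrow> R y z \<Longrightarrow>
                   w x z = w x y * w y z"
    and w_refl: "\<And>x. x \<in> S \<Longrightarrow> w x x = 1"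
  shows "is_inverse_on S (\<lambda>x y. w x y * Z x y) (\<lambda>x y. w x y * M x y)"
proof -
  have weighted: "w x z * U x z * (w z y * V z y) = w x y * (U x z * V z y)"
    if "x \<in> S" "y \<in> S" "z \<in> S"
      and "U x z \<noteq> 0 \<Longrightarrow> R x z" "V z y \<noteq> 0 \<Longrightarrow> R z y" for x y z U V
  proof (cases "U x z = 0 \<or> V z y = 0")
    case False
    then show ?thesis
      using that w_mult[of x z y] by simp
  qed auto
  have ZM: "w x z * Z x z * (w z y * M z y) = w x y * (Z x z * M z y)"
    and MZ: "w x z * M x z * (w z y * Z z y) = w x y * (M x z * Z z y)"
    if "x \<in> S" "y \<in> S" "z \<in> S" for x y z
    using that by (intro weighted; simp add: Z_supp M_supp)+
  show ?thesis
    using inv unfolding is_inverse_on_def by (simp add: ZM MZ w_refl sum_distrib_left[symmetric])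
qed

definition prefix_convex :: "'b list set \<Rightarrow> bool" where
  "prefix_convex S \<longleftrightarrow> (\<forall>x\<in>S. \<forall>y\<in>S. \<forall>z. prefix x z \<and> prefix z y \<longrightarrow> z \<in> S)"

definition prefix_mobius :: "'b list set \<Rightarrow> 'b list \<Rightarrow> 'b list \<Rightarrow> real" where
  "prefix_mobius S x y =
     (if x \<in> S \<and> y \<in> S then
        (if x = y then 1 else if y \<noteq> [] \<and> x = butlast y then -1 else 0)
      else 0)"

lemma strict_prefix_iff_prefix_butlast:
  "strict_prefix x y \<longleftrightarrow> y \<noteq> [] \<and> prefix x (butlast y)"
  by (cases y rule: rev_cases) (auto simp: strict_prefix_def dest: prefix_length_le)

lemma prefix_with_butlast_iff:
  "z \<noteq> [] \<and> butlast z = x \<and> prefix z y \<longleftrightarrow> strict_prefix x y \<and> z = take (Suc (length x)) y"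
proof
  assume "z \<noteq> [] \<and> butlast z = x \<and> prefix z y"
  then obtain r where "z = x @ [last z]" "y = z @ r"
    by (auto simp: prefix_def)
  then show "strict_prefix x y \<and> z = take (Suc (length x)) y"
    by (metis strict_prefixI' append.assoc append_Cons append_eq_conv_conj length_append_singleton)
next
  assume "strict_prefix x y \<and> z = take (Suc (length x)) y"
  then show "z \<noteq> [] \<and> butlast z = x \<and> prefix z y"
    using prefix_length_less[of x y] take_is_prefix[of "Suc (length x)" y]
    by (auto simp: butlast_take strict_prefix_def prefix_def)
qed

lemma prefix_mobius_eq:
  assumes "x \<in> S" and "y \<in> S"
  shows "prefix_mobius S x y =
    (if x = y then 1 else 0) - (if y \<noteq> [] \<and> x = butlast y then 1 else 0)"
  using assms by (cases y rule: rev_cases) (auto simp: prefix_mobius_def)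

lemma sum_zeta_prefix_mult_prefix_mobius:
  assumes "finite S" and convex: "prefix_convex S" and "x \<in> S" and "y \<in> S"
  shows "(\<Sum>z\<in>S. zeta_prefix x z * prefix_mobius S z y) = (if x = y then 1 else 0)"
proof -
  have "(\<Sum>z\<in>S. zeta_prefix x z * prefix_mobius S z y) =
      (\<Sum>z\<in>S. (if z = y then zeta_prefix x z else 0) -
                 (if y \<noteq> [] \<and> z = butlast y then zeta_prefix x z else 0))"
    using assms by (intro sum.cong) (auto simp: prefix_mobius_eq)
  also have "\<dots> = zeta_prefix x y -
      (if y \<noteq> [] \<and> butlast y \<in> S then zeta_prefix x (butlast y) else 0)"
    using assms by (cases "y = []") (simp_all add: sum_subtractf)
  also have "\<dots> = (if x = y then 1 else 0)"
  proof (cases "strict_prefix x y")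
    case True
    then have "y \<noteq> []" and "prefix x (butlast y)"
      by (simp_all add: strict_prefix_iff_prefix_butlast)
    moreover have "butlast y \<in> S"
      using convex assms \<open>prefix x (butlast y)\<close> prefixeq_butlast
      unfolding prefix_convex_def by blast
    ultimately show ?thesis
      using True by (simp add: zeta_prefix_def strict_prefix_def)
  next
    case False
    then have "\<not> (y \<noteq> [] \<and> prefix x (butlast y))" and "prefix x y \<longleftrightarrow> x = y"
      using strict_prefix_iff_prefix_butlast[of x y] by (auto simp: strict_prefix_def)
    then show ?thesis
      by (auto simp: zeta_prefix_def)
  qed
  finally show ?thesis .
qed

lemma sum_prefix_mobius_mult_zeta_prefix:
  assumes "finite S" and convex: "prefix_convex S" and "x \<in> S" and "y \<in> S"
  shows "(\<Sum>z\<in>S. prefix_mobius S x z * zeta_prefix z y) = (if x = y then 1 else 0)"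
proof -
  define c where "c = take (Suc (length x)) y"
  have "prefix_mobius S x z * zeta_prefix z y =
      (if z = x then zeta_prefix z y else 0) - (if strict_prefix x y \<and> z = c then 1 else 0)"
    if "z \<in> S" for z
  proof -
    have cover: "z \<noteq> [] \<and> x = butlast z \<and> prefix z y \<longleftrightarrow> strict_prefix x y \<and> z = c"
      using prefix_with_butlast_iff[of z x y] unfolding c_def by metis
    show ?thesis
      unfolding prefix_mobius_eq[OF \<open>x \<in> S\<close> that] zeta_prefix_def cover[symmetric] by simp
  qed
  then have "(\<Sum>z\<in>S. prefix_mobius S x z * zeta_prefix z y) =
      (\<Sum>z\<in>S. (if z = x then zeta_prefix z y else 0) -
                 (if strict_prefix x y \<and> z = c then 1 else 0))"
    by (rule sum.cong[OF refl])
  also have "\<dots> = zeta_prefix x y - (if strict_prefix x y \<and> c \<in> S then 1 else 0)"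
    using assms by (cases "strict_prefix x y") (simp_all add: sum_subtractf)
  also have "\<dots> = (if x = y then 1 else 0)"
  proof (cases "strict_prefix x y")
    case True
    then have "butlast c = x" and "prefix c y"
      using prefix_with_butlast_iff[of c x y] by (simp_all add: c_def)
    then have "c \<in> S"
      using convex assms prefixeq_butlast[of c] unfolding prefix_convex_def by blast
    then show ?thesis
      using True by (simp add: zeta_prefix_def strict_prefix_def)
  next
    case False
    then have "prefix x y \<longleftrightarrow> x = y"
      by (auto simp: strict_prefix_def)
    then show ?thesis
      using False by (simp add: zeta_prefix_def)
  qed
  finally show ?thesis .
qed

lemma is_inverse_on_zeta_prefix:
  assumes "finite S" and "prefix_convex S"
  shows "is_inverse_on S zeta_prefix (prefix_mobius S)"
  using assms sum_zeta_prefix_mult_prefix_mobius sum_prefix_mobius_mult_zeta_prefix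
  unfolding is_inverse_on_def by blast

lemma prefix_mobius_nonzero_imp_prefix: "prefix_mobius S x y \<noteq> 0 \<Longrightarrow> prefix x y"
  by (auto simp: prefix_mobius_def prefixeq_butlast split: if_splits)

lemma finite_texts: "finite A \<Longrightarrow> finite (texts A N)"
proof -
  assume "finite A"
  then have words: "finite {a. set a \<subseteq> A \<and> length a \<le> N - 1}"
    using finite_lists_length_le by simp
  have "texts A N \<subseteq> (\<lambda>a. Bot # map Sym a) ` {a. set a \<subseteq> A \<and> length a \<le> N - 1}
      \<union> (\<lambda>a. Bot # map Sym a @ [Dag]) ` {a. set a \<subseteq> A \<and> length a \<le> N - 1}"
    unfolding texts_def by auto
  then show ?thesis
    using words by (meson finite_UnI finite_imageI finite_subset)
qed

lemma Bot_prefix_map_Sym_in_texts: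
  assumes "set a \<subseteq> A" "length a \<le> N - 1" "prefix zs (map Sym a)"
  shows "Bot # zs \<in> texts A N"
proof -
  obtain b where "prefix b a" "zs = map Sym b"
    using prefix_map_rightE[OF assms(3)] by blast
  moreover have "set b \<subseteq> A" "length b \<le> N - 1"
    using \<open>prefix b a\<close> assms set_mono_prefix prefix_length_le by fastforce+
  ultimately show ?thesis
    unfolding texts_def by blast
qed

lemma prefix_convex_texts: "prefix_convex (texts A N)"
  unfolding prefix_convex_def
proof (intro ballI allI impI)
  fix x y z assume "x \<in> texts A N" "y \<in> texts A N" and "prefix x z \<and> prefix z y"
  then obtain zs where z: "z = Bot # zs" and "prefix z y"
    by (auto simp: texts_def prefix_Cons)
  from \<open>y \<in> texts A N\<close> consider
      (unfinished) a where "y = Bot # map Sym a" "set a \<subseteq> A" "length a \<le> N - 1"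
    | (finished) a where "y = Bot # map Sym a @ [Dag]" "set a \<subseteq> A" "length a < N - 1"
    unfolding texts_def by blast
  then show "z \<in> texts A N"
  proof cases
    case unfinished
    then show ?thesis
      using \<open>prefix z y\<close> z Bot_prefix_map_Sym_in_texts by simp
  next
    case finished
    then have "zs = map Sym a @ [Dag] \<or> prefix zs (map Sym a)"
      using \<open>prefix z y\<close> z by simp
    then show ?thesis
      using finished z \<open>y \<in> texts A N\<close> Bot_prefix_map_Sym_in_texts[of a A N zs] by auto
  qed
qed

lemma pi_cond_refl [simp]: "pi_cond p x x = 1"
  by (simp add: pi_cond_def)

lemma pi_cond_trans:
  assumes "prefix x y" "prefix y z"
  shows "pi_cond p z x = pi_cond p y x * pi_cond p z y"
proof -
  obtain r where r: "z = y @ r"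
    using assms(2) prefix_def by blast
  have "(\<Prod>i\<in>{length x..<length y}. p (take i z) (z ! i)) =
      (\<Prod>i\<in>{length x..<length y}. p (take i y) (y ! i))"
    using r by (intro prod.cong) (auto simp: nth_append)
  moreover have "length x \<le> length y" "length y \<le> length z"
    using assms prefix_length_le by auto
  ultimately show ?thesis
    using assms prefix_order.trans[OF assms]
    by (simp add: pi_cond_def prod.atLeastLessThan_concat[symmetric, of "length x" "length y" "length z"])
qed

lemma zeta_t_eq_weighted_zeta_prefix:
  "zeta_t p t = (\<lambda>x y. pi_cond p y x powr t * zeta_prefix x y)"
  by (intro ext) (simp add: zeta_t_def zeta_prefix_def pi_cond_def)

theorem corollary3p7:
  fixes A :: "'a set" and N :: nat and t :: real
    and p :: "'a sym list \<Rightarrow> 'a sym \<Rightarrow> real"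
  assumes "finite A" and "N \<ge> 1" and "t > 0"
    and p_nonneg: "\<And>x b. x \<in> unfinished A N \<Longrightarrow> length x \<le> N - 1 \<Longrightarrow>
                     b \<in> Sym ` A \<union> {Dag} \<Longrightarrow> p x b \<ge> 0"
    and p_sum: "\<And>x. x \<in> unfinished A N \<Longrightarrow> length x \<le> N - 1 \<Longrightarrow>
                     (\<Sum>b\<in>Sym ` A \<union> {Dag}. p x b) = 1"
    and "x \<in> texts A N" and "y \<in> texts A N"
  shows "matinv (texts A N) (zeta_t p t) x y = pi_cond p y x powr t * mobius_L A N x y"
proof -
  let ?S = "texts A N"
  have fin: "finite ?S"
    using \<open>finite A\<close> by (rule finite_texts)
  have mobius_inv: "is_inverse_on ?S zeta_prefix (prefix_mobius ?S)"
    using fin prefix_convex_texts by (rule is_inverse_on_zeta_prefix)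
  have mobius: "mobius_L A N = prefix_mobius ?S"
    unfolding mobius_L_def using fin mobius_inv by (rule matinv_eqI) (auto simp: prefix_mobius_def)
  have "is_inverse_on ?S (zeta_t p t) (\<lambda>x y. pi_cond p y x powr t * prefix_mobius ?S x y)"
    unfolding zeta_t_eq_weighted_zeta_prefix
    using mobius_inv
  proof (rule is_inverse_on_weighted[where R = prefix])
    show "prefix x y" if "zeta_prefix x y \<noteq> 0" for x y :: "'a sym list"
      using that by (simp add: zeta_prefix_def split: if_splits)
    show "prefix x y" if "prefix_mobius ?S x y \<noteq> 0" for x y
      using that by (rule prefix_mobius_nonzero_imp_prefix)
    show "pi_cond p z x powr t = pi_cond p y x powr t * pi_cond p z y powr t"
      if "prefix x y" "prefix y z" for x y z
      using pi_cond_trans[OF that, of p] by (simp add: powr_mult)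
  qed simp
  then have "matinv ?S (zeta_t p t) = (\<lambda>x y. pi_cond p y x powr t * prefix_mobius ?S x y)"
    by (rule matinv_eqI[OF fin]) (auto simp: prefix_mobius_def)
  then show ?thesis
    by (simp add: mobius)
qed

end
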